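(* For $1<p<\infty$, every $L^p$-space endowed with a closed proper generating cone is a $\upsilon$-quasi-lattice. In particular, every $\ell^p$-space and every space $(\mathbb R^n,\|\cdot\|_p)$ endowed with a closed proper generating cone is a $\upsilon$-quasi-lattice. If, in addition, the space is monotone, it is also a $\mu$-quasi-lattice, and its $\upsilon$- and $\mu$-quasi-suprema coincide.
   Context: A cone in a real Banach space $X$ is $X_+$ with $X_++X_+\subseteq X_+$, $\lambda X_+\subseteq X_+$ for $\lambda\ge0$; proper: $X_+\cap(-X_+)=\{0\}$; generating: $X=X_+-X_+$; $x\le y$ means $y-x\in X_+$; monotone: $0\le x\le y$ implies $\|x\|\le\|y\|$. For $A\subseteq X$, $\upsilon(A)$ is the set of upper bounds and $\mu(A)$ the set of minimal upper bounds. Let $\sigma_{x,y}(z)=\|z-x\|+\|z-y\|$. $X$ (with closed cone) is a $\upsilon$-quasi-lattice (resp. $\mu$-quasi-lattice) if for all $x,y$ the set $\upsilon(\{x,y\})$ (resp. $\mu(\{x,y\})$) is non-empty and contains a unique minimizer of $\sigma_{x,y}$ on it, the $\upsilon$- (resp. $\mu$-) quasi-supremum. *)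

theory Defs
  imports "HOL-Analysis.Analysis"
begin

text \<open>The space L^p(M) is modelled by its set of representatives V (measurable
  functions with integrable p-th power) together with the L^p seminorm N.
  Elements of the actual Banach space are classes modulo N-null functions, so
  every notion below is stated modulo N-null differences (i.e. equality in the
  quotient is N (f - g) = 0).\<close>

definition Lp_set :: "'a measure \<Rightarrow> real \<Rightarrow> ('a \<Rightarrow> real) set" where
  "Lp_set M p = {f \<in> borel_measurable M. integrable M (\<lambda>x. \<bar>f x\<bar> powr p)}"

definition Lp_norm :: "'a measure \<Rightarrow> real \<Rightarrow> ('a \<Rightarrow> real) \<Rightarrow> real" where
  "Lp_norm M p f = (integral\<^sup>L M (\<lambda>x. \<bar>f x\<bar> powr p)) powr (1 / p)"

definition fdiff :: "('a \<Rightarrow> real) \<Rightarrow> ('a \<Rightarrow> real) \<Rightarrow> ('a \<Rightarrow> real)" where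
  "fdiff f g = (\<lambda>t. f t - g t)"

definition is_cone :: "('a \<Rightarrow> real) set \<Rightarrow> ('a \<Rightarrow> real) set \<Rightarrow> bool" where
  "is_cone V C \<longleftrightarrow> C \<subseteq> V \<and>
     (\<forall>f\<in>C. \<forall>g\<in>C. (\<lambda>t. f t + g t) \<in> C) \<and>
     (\<forall>f\<in>C. \<forall>c::real. c \<ge> 0 \<longrightarrow> (\<lambda>t. c * f t) \<in> C)"

definition cone_closed :: "('a \<Rightarrow> real) set \<Rightarrow> (('a \<Rightarrow> real) \<Rightarrow> real) \<Rightarrow> ('a \<Rightarrow> real) set \<Rightarrow> bool" where
  "cone_closed V N C \<longleftrightarrow> (\<forall>(s::nat \<Rightarrow> 'a \<Rightarrow> real) f.
      (\<forall>n. s n \<in> C) \<and> f \<in> V \<and> (\<lambda>n. N (fdiff (s n) f)) \<longlonglongrightarrow> 0 \<longrightarrow> f \<in> C)"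

definition cone_proper :: "(('a \<Rightarrow> real) \<Rightarrow> real) \<Rightarrow> ('a \<Rightarrow> real) set \<Rightarrow> bool" where
  "cone_proper N C \<longleftrightarrow> (\<forall>f\<in>C. (\<lambda>t. - f t) \<in> C \<longrightarrow> N f = 0)"

definition cone_generating :: "('a \<Rightarrow> real) set \<Rightarrow> (('a \<Rightarrow> real) \<Rightarrow> real) \<Rightarrow> ('a \<Rightarrow> real) set \<Rightarrow> bool" where
  "cone_generating V N C \<longleftrightarrow> (\<forall>f\<in>V. \<exists>g\<in>C. \<exists>h\<in>C. N (fdiff f (fdiff g h)) = 0)"

definition cone_monotone :: "(('a \<Rightarrow> real) \<Rightarrow> real) \<Rightarrow> ('a \<Rightarrow> real) set \<Rightarrow> bool" where
  "cone_monotone N C \<longleftrightarrow> (\<forall>f g. f \<in> C \<and> fdiff g f \<in> C \<longrightarrow> N f \<le> N g)"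

definition cle :: "('a \<Rightarrow> real) set \<Rightarrow> ('a \<Rightarrow> real) \<Rightarrow> ('a \<Rightarrow> real) \<Rightarrow> bool" where
  "cle C x y \<longleftrightarrow> fdiff y x \<in> C"

definition ubounds :: "('a \<Rightarrow> real) set \<Rightarrow> ('a \<Rightarrow> real) set \<Rightarrow> ('a \<Rightarrow> real) \<Rightarrow> ('a \<Rightarrow> real) \<Rightarrow> ('a \<Rightarrow> real) set" where
  "ubounds V C x y = {z \<in> V. cle C x z \<and> cle C y z}"

definition mubounds :: "('a \<Rightarrow> real) set \<Rightarrow> (('a \<Rightarrow> real) \<Rightarrow> real) \<Rightarrow> ('a \<Rightarrow> real) set \<Rightarrow> ('a \<Rightarrow> real) \<Rightarrow> ('a \<Rightarrow> real) \<Rightarrow> ('a \<Rightarrow> real) set" where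
  "mubounds V N C x y = {z \<in> ubounds V C x y.
      \<forall>w \<in> ubounds V C x y. cle C w z \<longrightarrow> N (fdiff z w) = 0}"

definition sigma :: "(('a \<Rightarrow> real) \<Rightarrow> real) \<Rightarrow> ('a \<Rightarrow> real) \<Rightarrow> ('a \<Rightarrow> real) \<Rightarrow> ('a \<Rightarrow> real) \<Rightarrow> real" where
  "sigma N x y z = N (fdiff z x) + N (fdiff z y)"

definition is_minimizer :: "('b \<Rightarrow> real) \<Rightarrow> 'b set \<Rightarrow> 'b \<Rightarrow> bool" where
  "is_minimizer F S z \<longleftrightarrow> z \<in> S \<and> (\<forall>w\<in>S. F z \<le> F w)"

definition quasi_lattice_wrt ::
  "('a \<Rightarrow> real) set \<Rightarrow> (('a \<Rightarrow> real) \<Rightarrow> real) \<Rightarrow>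
   (('a \<Rightarrow> real) \<Rightarrow> ('a \<Rightarrow> real) \<Rightarrow> ('a \<Rightarrow> real) set) \<Rightarrow> bool" where
  "quasi_lattice_wrt V N B \<longleftrightarrow> (\<forall>x\<in>V. \<forall>y\<in>V.
      B x y \<noteq> {} \<and>
      (\<exists>z. is_minimizer (sigma N x y) (B x y) z) \<and>
      (\<forall>z z'. is_minimizer (sigma N x y) (B x y) z \<and> is_minimizer (sigma N x y) (B x y) z'
          \<longrightarrow> N (fdiff z z') = 0))"

definition upsilon_quasi_lattice :: "('a \<Rightarrow> real) set \<Rightarrow> (('a \<Rightarrow> real) \<Rightarrow> real) \<Rightarrow> ('a \<Rightarrow> real) set \<Rightarrow> bool" where
  "upsilon_quasi_lattice V N C \<longleftrightarrow> cone_closed V N C \<and> quasi_lattice_wrt V N (ubounds V C)"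

definition mu_quasi_lattice :: "('a \<Rightarrow> real) set \<Rightarrow> (('a \<Rightarrow> real) \<Rightarrow> real) \<Rightarrow> ('a \<Rightarrow> real) set \<Rightarrow> bool" where
  "mu_quasi_lattice V N C \<longleftrightarrow> cone_closed V N C \<and> quasi_lattice_wrt V N (mubounds V N C)"

definition quasi_suprema_coincide :: "('a \<Rightarrow> real) set \<Rightarrow> (('a \<Rightarrow> real) \<Rightarrow> real) \<Rightarrow> ('a \<Rightarrow> real) set \<Rightarrow> bool" where
  "quasi_suprema_coincide V N C \<longleftrightarrow> (\<forall>x\<in>V. \<forall>y\<in>V. \<forall>z z'.
      is_minimizer (sigma N x y) (ubounds V C x y) z \<and>
      is_minimizer (sigma N x y) (mubounds V N C x y) z' \<longrightarrow> N (fdiff z z') = 0)"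

definition Lp_claim :: "'a measure \<Rightarrow> real \<Rightarrow> bool" where
  "Lp_claim M p \<longleftrightarrow> (\<forall>C. let V = Lp_set M p; N = Lp_norm M p in
      is_cone V C \<and> cone_closed V N C \<and> cone_proper N C \<and> cone_generating V N C \<longrightarrow>
        upsilon_quasi_lattice V N C \<and>
        (cone_monotone N C \<longrightarrow> mu_quasi_lattice V N C \<and> quasi_suprema_coincide V N C))"

end

theory Submission
  imports Defs
begin

text \<open>For \<open>1 < p\<close>, \<open>L\<^sup>p\<close> is complete and uniformly convex. Uniform convexity comes from
  integrating the pointwise estimate
  \<open>\<bar>a - b\<bar>\<^sup>p \<le> \<epsilon> (\<bar>a\<bar>\<^sup>p + \<bar>b\<bar>\<^sup>p) + K ((\<bar>a\<bar>\<^sup>p + \<bar>b\<bar>\<^sup>p) / 2 - \<bar>(a + b) / 2\<bar>\<^sup>p)\<close>,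
  which follows by compactness and homogeneity from the strict convexity of \<open>\<bar>t\<bar>\<^sup>p\<close>.

  In any complete uniformly convex space with a closed generating cone, \<open>\<sigma>\<^sub>x\<^sub>,\<^sub>y\<close> attains
  its infimum on the nonempty convex set \<open>\<upsilon>{x, y}\<close>: midpoints of a minimizing sequence are
  again upper bounds, which forces the sequence to be Cauchy, and the cone is closed. At the
  midpoint of two minimizers \<open>z\<^sub>1, z\<^sub>2\<close> both triangle inequalities hidden in \<open>\<sigma>\<close> are
  equalities, so by strict convexity \<open>z\<^sub>1 - x, z\<^sub>2 - x\<close> are parallel, and so are
  \<open>z\<^sub>1 - y, z\<^sub>2 - y\<close>; comparing lengths gives \<open>z\<^sub>1 - z\<^sub>2 \<in> C\<close> and \<open>z\<^sub>2 - z\<^sub>1 \<in> C\<close>, hence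
  \<open>z\<^sub>1 = z\<^sub>2\<close> since the cone is proper. For a monotone norm, an upper bound below the minimizer has
  no larger \<open>\<sigma>\<close>-value, so the minimizer is a minimal upper bound and both quasi-suprema agree.
  The spaces \<open>\<ell>\<^sup>p\<close> and \<open>(\<real>\<^sup>n, \<parallel>\<cdot>\<parallel>\<^sub>p)\<close> are \<open>L\<^sup>p\<close> of counting measures.\<close>

section \<open>Uniformly convex function spaces\<close>

lemma fdiff_fdiff_cancel: "fdiff (fdiff f h) (fdiff g h) = fdiff f g"
  by (auto simp: fdiff_def)

lemma cone_proper_antisym:
  assumes "cone_proper N C" "fdiff f g \<in> C" "fdiff g f \<in> C"
  shows "N (fdiff f g) = 0"
proof -
  have "(\<lambda>t. - fdiff f g t) = fdiff g f"
    by (auto simp: fdiff_def)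
  then show ?thesis
    using assms by (simp add: cone_proper_def)
qed

locale seminormed_function_space =
  fixes V :: "('a \<Rightarrow> real) set" and N :: "('a \<Rightarrow> real) \<Rightarrow> real"
  assumes add_closed: "\<lbrakk>f \<in> V; g \<in> V\<rbrakk> \<Longrightarrow> (\<lambda>t. f t + g t) \<in> V"
    and scale_closed: "f \<in> V \<Longrightarrow> (\<lambda>t. c * f t) \<in> V"
    and norm_nonneg: "0 \<le> N f"
    and norm_scale: "N (\<lambda>t. c * f t) = \<bar>c\<bar> * N f"
    and norm_triangle: "\<lbrakk>f \<in> V; g \<in> V\<rbrakk> \<Longrightarrow> N (\<lambda>t. f t + g t) \<le> N f + N g"
begin

lemma lincomb_closed: "\<lbrakk>f \<in> V; g \<in> V\<rbrakk> \<Longrightarrow> (\<lambda>t. a * f t + b * g t) \<in> V"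
  by (intro add_closed scale_closed)

lemma diff_closed: "\<lbrakk>f \<in> V; g \<in> V\<rbrakk> \<Longrightarrow> fdiff f g \<in> V"
  using lincomb_closed[of f g 1 "-1"] by (simp add: fdiff_def)

lemma midpoint_closed: "\<lbrakk>f \<in> V; g \<in> V\<rbrakk> \<Longrightarrow> (\<lambda>t. (f t + g t) / 2) \<in> V"
  using lincomb_closed[of f g "1/2" "1/2"] by (simp add: add_divide_distrib)

lemma divide_closed: "f \<in> V \<Longrightarrow> (\<lambda>t. f t / c) \<in> V"
  using scale_closed[of f "1 / c"] by simp

lemma norm_divide: "N (\<lambda>t. f t / c) = N f / \<bar>c\<bar>"
  using norm_scale[of "1 / c" f] by simp

lemma norm_lincomb_le:
  "\<lbrakk>f \<in> V; g \<in> V\<rbrakk> \<Longrightarrow> N (\<lambda>t. a * f t + b * g t) \<le> \<bar>a\<bar> * N f + \<bar>b\<bar> * N g"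
  using norm_triangle[OF scale_closed scale_closed] by (simp add: norm_scale)

lemma norm_midpoint: "N (\<lambda>t. (f t + g t) / 2) = N (\<lambda>t. f t + g t) / 2"
  using norm_scale[of "1/2" "\<lambda>t. f t + g t"] by simp

lemma norm_fdiff_commute: "N (fdiff f g) = N (fdiff g f)"
  using norm_scale[of "-1" "fdiff g f"] by (simp add: fdiff_def)

lemma norm_fdiff_triangle:
  assumes "f \<in> V" "g \<in> V" "h \<in> V"
  shows "N (fdiff f h) \<le> N (fdiff f g) + N (fdiff g h)"
proof -
  have "fdiff f h = (\<lambda>t. fdiff f g t + fdiff g h t)"
    by (auto simp: fdiff_def)
  then show ?thesis
    using norm_triangle[OF diff_closed diff_closed] assms by metis
qed

lemma norm_midpoint_fdiff_le:
  assumes "f \<in> V" "g \<in> V" "a \<in> V"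
  shows "N (fdiff (\<lambda>t. (f t + g t) / 2) a) \<le> (N (fdiff f a) + N (fdiff g a)) / 2"
proof -
  have "fdiff (\<lambda>t. (f t + g t) / 2) a = (\<lambda>t. (1/2) * fdiff f a t + (1/2) * fdiff g a t)"
    by (auto simp: fdiff_def field_simps)
  then show ?thesis
    using norm_lincomb_le[OF diff_closed diff_closed, of f a g a "1/2" "1/2"] assms by simp
qed

end

locale uniformly_convex_function_space = seminormed_function_space +
  assumes complete: "\<lbrakk>\<And>n. s n \<in> V; \<And>e. 0 < e \<Longrightarrow> \<exists>n0. \<forall>i\<ge>n0. \<forall>j\<ge>n0. N (fdiff (s i) (s j)) < e\<rbrakk>
      \<Longrightarrow> \<exists>f\<in>V. (\<lambda>n. N (fdiff (s n) f)) \<longlonglongrightarrow> 0"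
    and uniformly_convex: "0 < e \<Longrightarrow> \<exists>\<delta>>0. \<forall>u\<in>V. \<forall>v\<in>V.
      N u \<le> 1 \<longrightarrow> N v \<le> 1 \<longrightarrow> e \<le> N (fdiff u v) \<longrightarrow> N (\<lambda>t. (u t + v t) / 2) \<le> 1 - \<delta>"
begin

lemma uniformly_convex_scaled:
  assumes "0 < e"
  obtains \<delta> where "0 < \<delta>"
    and "\<And>f g s. \<lbrakk>f \<in> V; g \<in> V; N f \<le> s; N g \<le> s; (1 - \<delta>) * s < N (\<lambda>t. (f t + g t) / 2)\<rbrakk>
      \<Longrightarrow> N (fdiff f g) < e * s"
proof -
  obtain \<delta> where \<delta>: "0 < \<delta>" and uc: "\<forall>f\<in>V. \<forall>g\<in>V. N f \<le> 1 \<longrightarrow> N g \<le> 1 \<longrightarrow>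
      e \<le> N (fdiff f g) \<longrightarrow> N (\<lambda>t. (f t + g t) / 2) \<le> 1 - \<delta>"
    using uniformly_convex[OF assms] by auto
  have "N (fdiff f g) < e * s"
    if f: "f \<in> V" and g: "g \<in> V" and s: "N f \<le> s" "N g \<le> s"
      and mid: "(1 - \<delta>) * s < N (\<lambda>t. (f t + g t) / 2)" for f g s
  proof (rule ccontr)
    assume "\<not> N (fdiff f g) < e * s"
    have "N (\<lambda>t. (f t + g t) / 2) \<le> s"
      using norm_triangle[OF f g] s by (simp add: norm_midpoint)
    then have s_pos: "0 < s"
      using mid s norm_nonneg[of f] by (cases "s = 0") auto
    have "fdiff (\<lambda>t. f t / s) (\<lambda>t. g t / s) = (\<lambda>t. fdiff f g t / s)"
      by (simp add: fdiff_def diff_divide_distrib)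
    then have "e \<le> N (fdiff (\<lambda>t. f t / s) (\<lambda>t. g t / s))"
      using \<open>\<not> N (fdiff f g) < e * s\<close> s_pos by (simp add: norm_divide pos_le_divide_eq)
    then have "N (\<lambda>t. (f t / s + g t / s) / 2) \<le> 1 - \<delta>"
      using uc f g s s_pos by (simp add: divide_closed norm_divide)
    moreover have "(\<lambda>t. (f t / s + g t / s) / 2) = (\<lambda>t. (f t + g t) / 2 / s)"
      by (simp add: add_divide_distrib mult.commute)
    ultimately have "N (\<lambda>t. (f t + g t) / 2) \<le> (1 - \<delta>) * s"
      using s_pos by (simp add: norm_divide pos_divide_le_eq)
    with mid show False
      by simp
  qed
  with \<delta> that show thesis
    by blast
qed

lemma norm_diff_tendsto_zero:
  assumes V: "\<forall>\<^sub>F i in F. u i \<in> V \<and> v i \<in> V"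
    and u: "((\<lambda>i. N (u i)) \<longlongrightarrow> a) F" and v: "((\<lambda>i. N (v i)) \<longlongrightarrow> a) F"
    and m: "((\<lambda>i. N (\<lambda>t. (u i t + v i t) / 2)) \<longlongrightarrow> a) F"
  shows "((\<lambda>i. N (fdiff (u i) (v i))) \<longlongrightarrow> 0) F"
proof (cases "F = bot")
  case False
  have "0 \<le> a"
    using tendsto_lowerbound[OF u _ False] norm_nonneg by simp
  moreover have ?thesis if "a = 0"
  proof (rule tendsto_sandwich[of "\<lambda>_. 0" _ _ "\<lambda>i. N (u i) + N (v i)"])
    show "\<forall>\<^sub>F i in F. N (fdiff (u i) (v i)) \<le> N (u i) + N (v i)"
      using V by eventually_elim (use norm_lincomb_le[of _ _ 1 "-1"] in \<open>simp add: fdiff_def\<close>)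
    show "((\<lambda>i. N (u i) + N (v i)) \<longlongrightarrow> 0) F"
      using tendsto_add[OF u v] that by simp
  qed (simp_all add: norm_nonneg)
  moreover have ?thesis if a: "0 < a"
  proof (rule order_tendstoI)
    fix e :: real assume e: "0 < e"
    obtain \<delta> where \<delta>: "0 < \<delta>" and scaled: "\<And>f g s. \<lbrakk>f \<in> V; g \<in> V; N f \<le> s; N g \<le> s;
        (1 - \<delta>) * s < N (\<lambda>t. (f t + g t) / 2)\<rbrakk> \<Longrightarrow> N (fdiff f g) < e / (2 * a) * s"
      using uniformly_convex_scaled[of "e / (2 * a)"] e a by auto
    define s where "s = (\<lambda>i. max (N (u i)) (N (v i)))"
    have s: "(s \<longlongrightarrow> a) F"
      using tendsto_max[OF u v] by (simp add: s_def)
    have "((\<lambda>i. N (\<lambda>t. (u i t + v i t) / 2) - (1 - \<delta>) * s i) \<longlongrightarrow> a - (1 - \<delta>) * a) F"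
      by (intro tendsto_intros m s)
    moreover have "0 < a - (1 - \<delta>) * a"
      using \<delta> a by (simp add: algebra_simps)
    ultimately have "\<forall>\<^sub>F i in F. 0 < N (\<lambda>t. (u i t + v i t) / 2) - (1 - \<delta>) * s i"
      by (rule order_tendstoD(1))
    then have "\<forall>\<^sub>F i in F. (1 - \<delta>) * s i < N (\<lambda>t. (u i t + v i t) / 2)"
      by (rule eventually_mono) simp
    moreover have "\<forall>\<^sub>F i in F. s i < 2 * a"
      using order_tendstoD(2)[OF s] a by simp
    ultimately show "\<forall>\<^sub>F i in F. N (fdiff (u i) (v i)) < e"
      using V
    proof eventually_elim
      case (elim i)
      then have "N (fdiff (u i) (v i)) < e / (2 * a) * s i"
        by (intro scaled) (auto simp: s_def)
      also have "\<dots> \<le> e"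
        using elim a e by (simp add: field_simps)
      finally show ?case .
    qed
  qed (auto intro!: always_eventually intro: less_le_trans[OF _ norm_nonneg])
  ultimately show ?thesis
    by fastforce
qed simp

lemma equal_norms_midpoint_imp_null:
  assumes "u \<in> V" "v \<in> V" "N u = a" "N v = a" "N (\<lambda>t. (u t + v t) / 2) = a"
  shows "N (fdiff u v) = 0"
  using norm_diff_tendsto_zero[where F=sequentially and u="\<lambda>_. u" and v="\<lambda>_. v" and a=a] assms
  by (simp add: LIMSEQ_const_iff)

lemma norm_sum_normalized_ge:
  assumes u: "u \<in> V" and v: "v \<in> V" and sum: "N (\<lambda>t. u t + v t) = N u + N v"
    and pos: "0 < N v" and le: "N v \<le> N u"
  shows "2 \<le> N (\<lambda>t. u t / N u + v t / N v)"
proof -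
  let ?a = "N u" and ?b = "N v"
  have eq: "(\<lambda>t. (u t + v t) / ?b) = (\<lambda>t. 1 * (u t / ?a + v t / ?b) + (1 / ?b - 1 / ?a) * u t)"
    using pos le by (auto simp: field_simps)
  have coeff: "\<bar>1 / ?b - 1 / ?a\<bar> = 1 / ?b - 1 / ?a"
    using pos le by (simp add: frac_le)
  have "N (\<lambda>t. (u t + v t) / ?b) \<le> N (\<lambda>t. u t / ?a + v t / ?b) + (1 / ?b - 1 / ?a) * ?a"
    using norm_lincomb_le[OF add_closed[OF divide_closed[OF u, of ?a] divide_closed[OF v, of ?b]] u,
        where a=1 and b="1 / ?b - 1 / ?a"]
    unfolding eq[symmetric] coeff by simp
  moreover have "N (\<lambda>t. (u t + v t) / ?b) = ?a / ?b + 1"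
    unfolding norm_divide using sum pos by (simp add: add_divide_distrib)
  moreover have "(1 / ?b - 1 / ?a) * ?a = ?a / ?b - 1"
    using pos le by (simp add: field_simps)
  ultimately show ?thesis
    by linarith
qed

lemma norm_sum_eq_imp_parallel:
  assumes u: "u \<in> V" and v: "v \<in> V" and sum: "N (\<lambda>t. u t + v t) = N u + N v"
    and pos: "0 < N v"
  shows "N (fdiff u (\<lambda>t. (N u / N v) * v t)) = 0"
proof (cases "N u = 0")
  case False
  then have pos_u: "0 < N u"
    using norm_nonneg[of u] by simp
  define u' where "u' = (\<lambda>t. u t / N u)"
  define v' where "v' = (\<lambda>t. v t / N v)"
  have u': "u' \<in> V" "N u' = 1" and v': "v' \<in> V" "N v' = 1"
    using u v pos pos_u by (simp_all add: u'_def v'_def divide_closed norm_divide)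
  have sum': "(\<lambda>t. u' t + v' t) = (\<lambda>t. u t / N u + v t / N v)"
    by (simp add: u'_def v'_def)
  have "2 \<le> N (\<lambda>t. u' t + v' t)"
  proof (cases "N v \<le> N u")
    case True
    then show ?thesis
      unfolding sum' using norm_sum_normalized_ge[OF u v sum pos] by simp
  next
    case False
    then have "2 \<le> N (\<lambda>t. v t / N v + u t / N u)"
      using norm_sum_normalized_ge[OF v u _ pos_u] sum by (simp add: add.commute)
    then show ?thesis
      unfolding sum' by (simp add: add.commute)
  qed
  moreover have "N (\<lambda>t. u' t + v' t) \<le> 2"
    using norm_triangle[OF u'(1) v'(1)] u'(2) v'(2) by simp
  ultimately have "N (\<lambda>t. (u' t + v' t) / 2) = 1"
    by (simp add: norm_midpoint)
  then have null: "N (fdiff u' v') = 0"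
    using equal_norms_midpoint_imp_null[OF u'(1) v'(1) u'(2) v'(2)] by simp
  have "fdiff u (\<lambda>t. (N u / N v) * v t) = (\<lambda>t. N u * fdiff u' v' t)"
    using pos pos_u by (auto simp: fdiff_def u'_def v'_def field_simps)
  then show ?thesis
    using null by (simp add: norm_scale)
qed (simp add: fdiff_def)

section \<open>Quasi-suprema with respect to a closed cone\<close>

context
  fixes C :: "('a \<Rightarrow> real) set"
  assumes cone: "is_cone V C" and closed: "cone_closed V N C"
begin

lemma cone_subset: "f \<in> C \<Longrightarrow> f \<in> V"
  using cone by (auto simp: is_cone_def)

lemma cone_lincomb: "\<lbrakk>f \<in> C; g \<in> C; 0 \<le> a; 0 \<le> b\<rbrakk> \<Longrightarrow> (\<lambda>t. a * f t + b * g t) \<in> C"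
proof -
  assume "f \<in> C" "g \<in> C" "0 \<le> a" "0 \<le> b"
  with cone have "(\<lambda>t. a * f t) \<in> C" "(\<lambda>t. b * g t) \<in> C"
    by (simp_all add: is_cone_def)
  with cone show ?thesis
    by (simp add: is_cone_def)
qed

lemma cone_limit: "\<lbrakk>\<And>n. s n \<in> C; f \<in> V; (\<lambda>n. N (fdiff (s n) f)) \<longlonglongrightarrow> 0\<rbrakk> \<Longrightarrow> f \<in> C"
  using closed unfolding cone_closed_def by blast

lemma cone_null_diff: "\<lbrakk>g \<in> C; f \<in> V; N (fdiff g f) = 0\<rbrakk> \<Longrightarrow> f \<in> C"
  by (rule cone_limit[of "\<lambda>_. g"]) auto

lemma cone_diff_mem_if_norm_sum_eq:
  assumes u1: "u1 \<in> C" and u2: "u2 \<in> V"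
    and sum: "N (\<lambda>t. u1 t + u2 t) = N u1 + N u2" and lt: "N u2 < N u1"
  shows "fdiff u1 u2 \<in> C"
proof -
  have pos: "0 < N u1"
    using lt norm_nonneg[of u2] by linarith
  define c where "c = N u2 / N u1"
  have c: "0 \<le> c" "c < 1"
    using pos lt norm_nonneg[of u2] by (auto simp: c_def)
  have "N (fdiff u2 (\<lambda>t. c * u1 t)) = 0"
    unfolding c_def using norm_sum_eq_imp_parallel[OF u2 cone_subset[OF u1]] sum pos
    by (simp add: add.commute)
  moreover have "fdiff (\<lambda>t. (1 - c) * u1 t) (fdiff u1 u2) = fdiff u2 (\<lambda>t. c * u1 t)"
    by (auto simp: fdiff_def algebra_simps)
  moreover have "(\<lambda>t. (1 - c) * u1 t) \<in> C"
    using cone_lincomb[OF u1 u1, of "1 - c" 0] c by simp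
  ultimately show ?thesis
    using cone_null_diff diff_closed[OF cone_subset[OF u1] u2] by metis
qed

context
  fixes x y :: "'a \<Rightarrow> real"
  assumes x: "x \<in> V" and y: "y \<in> V"
begin

lemma mem_ubounds_iff: "z \<in> ubounds V C x y \<longleftrightarrow> z \<in> V \<and> fdiff z x \<in> C \<and> fdiff z y \<in> C"
  by (simp add: ubounds_def cle_def)

lemma ubounds_nonempty:
  assumes "cone_generating V N C"
  shows "ubounds V C x y \<noteq> {}"
proof -
  obtain g h where g: "g \<in> C" and h: "h \<in> C" and gh: "N (fdiff (fdiff x y) (fdiff g h)) = 0"
    using assms diff_closed[OF x y] unfolding cone_generating_def by blast
  define z where "z = (\<lambda>t. x t + h t)"
  have z: "z \<in> V"
    unfolding z_def using add_closed[OF x cone_subset[OF h]] .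
  have zx: "fdiff z x = h"
    by (auto simp: z_def fdiff_def)
  have "fdiff (fdiff z y) g = fdiff (fdiff x y) (fdiff g h)"
    by (auto simp: z_def fdiff_def)
  then have "N (fdiff g (fdiff z y)) = 0"
    using gh norm_fdiff_commute[of g "fdiff z y"] by simp
  then have "z \<in> ubounds V C x y"
    using h zx cone_null_diff[OF g diff_closed[OF z y]] z by (simp add: mem_ubounds_iff)
  then show ?thesis
    by blast
qed

lemma midpoint_mem_ubounds:
  assumes z: "z \<in> ubounds V C x y" and w: "w \<in> ubounds V C x y"
  shows "(\<lambda>t. (z t + w t) / 2) \<in> ubounds V C x y"
proof -
  have "fdiff (\<lambda>t. (z t + w t) / 2) a \<in> C" if "fdiff z a \<in> C" "fdiff w a \<in> C" for a
  proof -
    have "(\<lambda>t. (1/2) * fdiff z a t + (1/2) * fdiff w a t) \<in> C"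
      by (rule cone_lincomb[OF that]) simp_all
    moreover have "fdiff (\<lambda>t. (z t + w t) / 2) a = (\<lambda>t. (1/2) * fdiff z a t + (1/2) * fdiff w a t)"
      by (auto simp: fdiff_def field_simps)
    ultimately show ?thesis
      by simp
  qed
  then show ?thesis
    using z w midpoint_closed by (simp add: mem_ubounds_iff)
qed

lemma minimizing_sequence:
  assumes "ubounds V C x y \<noteq> {}"
  obtains w l where "\<And>n. w n \<in> ubounds V C x y"
    and "(\<lambda>n. sigma N x y (w n)) \<longlonglongrightarrow> Inf (sigma N x y ` ubounds V C x y)"
    and "(\<lambda>n. N (fdiff (w n) x)) \<longlonglongrightarrow> l"
proof -
  let ?U = "ubounds V C x y" and ?\<sigma> = "sigma N x y"
  define d where "d = Inf (?\<sigma> ` ?U)"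
  have bdd: "bdd_below (?\<sigma> ` ?U)"
    by (rule bdd_belowI[of _ 0]) (auto simp: sigma_def norm_nonneg)
  have "\<exists>z\<in>?U. ?\<sigma> z < d + 1 / Suc n" for n
    using cInf_lessD[of "?\<sigma> ` ?U" "d + 1 / Suc n"] assms by (auto simp: d_def)
  then obtain z where zU: "\<And>n. z n \<in> ?U" and z_lt: "\<And>n. ?\<sigma> (z n) < d + 1 / Suc n"
    by metis
  have "(\<lambda>n. ?\<sigma> (z n)) \<longlonglongrightarrow> d"
  proof (rule tendsto_sandwich[of "\<lambda>_. d" _ _ "\<lambda>n. d + 1 / Suc n"])
    show "\<forall>\<^sub>F n in sequentially. d \<le> ?\<sigma> (z n)"
      using zU bdd by (auto simp: d_def intro!: always_eventually cInf_lower)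
    show "\<forall>\<^sub>F n in sequentially. ?\<sigma> (z n) \<le> d + 1 / Suc n"
      by (intro always_eventually allI less_imp_le z_lt)
    show "(\<lambda>n. d + 1 / Suc n) \<longlonglongrightarrow> d"
      using tendsto_add[OF tendsto_const LIMSEQ_Suc[OF lim_inverse_n']] by simp
  qed simp
  moreover have bounded: "N (fdiff (z n) x) \<in> {0..d + 1}" for n
  proof -
    have "1 / real (Suc n) \<le> 1"
      by simp
    then show ?thesis
      using z_lt[of n] norm_nonneg[of "fdiff (z n) y"] norm_nonneg[of "fdiff (z n) x"]
      unfolding sigma_def atLeastAtMost_iff by (intro conjI) linarith+
  qed
  then obtain l r where "strict_mono r" "((\<lambda>n. N (fdiff (z n) x)) \<circ> r) \<longlonglongrightarrow> l"
    using seq_compactE[OF compact_imp_seq_compact[OF compact_Icc], where f="\<lambda>n. N (fdiff (z n) x)"]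
      bounded by blast
  ultimately show ?thesis
    using that[of "z \<circ> r" l] zU LIMSEQ_subseq_LIMSEQ unfolding d_def comp_def by blast
qed

lemma minimizing_families_converge_together:
  assumes wU: "\<And>i. u i \<in> ubounds V C x y" "\<And>i. v i \<in> ubounds V C x y"
    and lower: "\<And>z. z \<in> ubounds V C x y \<Longrightarrow> d \<le> sigma N x y z"
    and su: "((\<lambda>i. sigma N x y (u i)) \<longlongrightarrow> d) F" and sv: "((\<lambda>i. sigma N x y (v i)) \<longlongrightarrow> d) F"
    and ux: "((\<lambda>i. N (fdiff (u i) x)) \<longlongrightarrow> l) F" and vx: "((\<lambda>i. N (fdiff (v i) x)) \<longlongrightarrow> l) F"
  shows "((\<lambda>i. N (fdiff (u i) (v i))) \<longlongrightarrow> 0) F"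
proof -
  have V: "u i \<in> V" "v i \<in> V" for i
    using wU by (simp_all add: mem_ubounds_iff)
  have uy: "((\<lambda>i. N (fdiff (u i) y)) \<longlongrightarrow> d - l) F" and vy: "((\<lambda>i. N (fdiff (v i) y)) \<longlongrightarrow> d - l) F"
    using tendsto_diff[OF su ux] tendsto_diff[OF sv vx] by (simp_all add: sigma_def)
  let ?m = "\<lambda>i t. (u i t + v i t) / 2"
  have "((\<lambda>i. N (fdiff (?m i) x)) \<longlongrightarrow> l) F"
  proof (rule tendsto_sandwich)
    \<comment> \<open>The midpoint is again an upper bound, so its \<open>\<sigma>\<close>-value is at least \<open>d\<close>.\<close>
    have "d - (N (fdiff (u i) y) + N (fdiff (v i) y)) / 2 \<le> N (fdiff (?m i) x)" for i
      using lower[OF midpoint_mem_ubounds[OF wU(1)[of i] wU(2)[of i]]]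
        norm_midpoint_fdiff_le[OF V(1)[of i] V(2)[of i] y]
      unfolding sigma_def by linarith
    then show "\<forall>\<^sub>F i in F. d - (N (fdiff (u i) y) + N (fdiff (v i) y)) / 2 \<le> N (fdiff (?m i) x)"
      by simp
    show "\<forall>\<^sub>F i in F. N (fdiff (?m i) x) \<le> (N (fdiff (u i) x) + N (fdiff (v i) x)) / 2"
      by (intro always_eventually allI norm_midpoint_fdiff_le V x)
    have "((\<lambda>i. d - (N (fdiff (u i) y) + N (fdiff (v i) y)) / 2) \<longlongrightarrow> d - ((d - l) + (d - l)) / 2) F"
      by (intro tendsto_intros uy vy) simp
    then show "((\<lambda>i. d - (N (fdiff (u i) y) + N (fdiff (v i) y)) / 2) \<longlongrightarrow> l) F"
      by (simp add: field_simps)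
    show "((\<lambda>i. (N (fdiff (u i) x) + N (fdiff (v i) x)) / 2) \<longlongrightarrow> l) F"
      using tendsto_divide[OF tendsto_add[OF ux vx], of "\<lambda>_. 2" 2] by simp
  qed
  moreover have "fdiff (?m i) x = (\<lambda>t. (fdiff (u i) x t + fdiff (v i) x t) / 2)" for i
    by (auto simp: fdiff_def field_simps)
  ultimately have "((\<lambda>i. N (fdiff (fdiff (u i) x) (fdiff (v i) x))) \<longlongrightarrow> 0) F"
    using ux vx V x by (intro norm_diff_tendsto_zero) (auto intro!: always_eventually diff_closed)
  then show ?thesis
    by (simp add: fdiff_fdiff_cancel)
qed

lemma minimizing_sequence_Cauchy:
  assumes wU: "\<And>n. w n \<in> ubounds V C x y"
    and lower: "\<And>z. z \<in> ubounds V C x y \<Longrightarrow> d \<le> sigma N x y z"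
    and sw: "(\<lambda>n. sigma N x y (w n)) \<longlonglongrightarrow> d" and wx: "(\<lambda>n. N (fdiff (w n) x)) \<longlonglongrightarrow> l"
    and e: "0 < e"
  shows "\<exists>n0. \<forall>i\<ge>n0. \<forall>j\<ge>n0. N (fdiff (w i) (w j)) < e"
proof -
  have "((\<lambda>ij. N (fdiff (w (fst ij)) (w (snd ij)))) \<longlongrightarrow> 0) (sequentially \<times>\<^sub>F sequentially)"
    by (rule minimizing_families_converge_together[where u="\<lambda>ij. w (fst ij)" and v="\<lambda>ij. w (snd ij)"])
      (auto intro: wU lower filterlim_compose[OF sw] filterlim_compose[OF wx]
        filterlim_fst filterlim_snd)
  then have "\<forall>\<^sub>F ij in sequentially \<times>\<^sub>F sequentially. N (fdiff (w (fst ij)) (w (snd ij))) < e"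
    using e by (simp add: order_tendstoD(2))
  then show ?thesis
    unfolding eventually_prod_sequentially by auto
qed

lemma sigma_has_minimizer_on_ubounds:
  assumes gen: "cone_generating V N C"
  shows "\<exists>z. is_minimizer (sigma N x y) (ubounds V C x y) z"
proof -
  let ?U = "ubounds V C x y" and ?\<sigma> = "sigma N x y"
  define d where "d = Inf (?\<sigma> ` ?U)"
  have lower: "d \<le> ?\<sigma> z" if "z \<in> ?U" for z
    unfolding d_def using that
    by (intro cInf_lower imageI bdd_belowI[of _ 0]) (auto simp: sigma_def norm_nonneg)
  obtain w l where wU: "\<And>n. w n \<in> ?U" and sw: "(\<lambda>n. ?\<sigma> (w n)) \<longlonglongrightarrow> d"
    and wx: "(\<lambda>n. N (fdiff (w n) x)) \<longlonglongrightarrow> l"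
    using minimizing_sequence[OF ubounds_nonempty[OF gen]] unfolding d_def by blast
  have wV: "w n \<in> V" for n
    using wU by (simp add: mem_ubounds_iff)
  obtain f where f: "f \<in> V" and wf: "(\<lambda>n. N (fdiff (w n) f)) \<longlonglongrightarrow> 0"
    using complete[OF wV minimizing_sequence_Cauchy[OF wU lower sw wx]] by blast
  have "fdiff f a \<in> C" if a: "a \<in> V" and wa: "\<And>n. fdiff (w n) a \<in> C" for a
  proof (rule cone_limit[OF wa diff_closed[OF f a]])
    have "fdiff (fdiff (w n) a) (fdiff f a) = fdiff (w n) f" for n
      by (auto simp: fdiff_def)
    then show "(\<lambda>n. N (fdiff (fdiff (w n) a) (fdiff f a))) \<longlonglongrightarrow> 0"
      using wf by simp
  qed
  then have fU: "f \<in> ?U"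
    using f wU x y by (simp add: mem_ubounds_iff)
  have "?\<sigma> f \<le> ?\<sigma> (w n) + 2 * N (fdiff (w n) f)" for n
    using norm_fdiff_triangle[OF f wV x, of n] norm_fdiff_triangle[OF f wV y, of n]
      norm_fdiff_commute[of f "w n"]
    by (simp add: sigma_def)
  moreover have "(\<lambda>n. ?\<sigma> (w n) + 2 * N (fdiff (w n) f)) \<longlonglongrightarrow> d"
    using tendsto_add[OF sw tendsto_mult[OF tendsto_const wf]] by simp
  ultimately have "?\<sigma> f \<le> d"
    by (intro LIMSEQ_le_const) auto
  then have "is_minimizer ?\<sigma> ?U f"
    using fU lower by (auto simp: is_minimizer_def intro: order_trans)
  then show ?thesis
    by blast
qed

lemma sigma_minimizers_norm_sum_eq:
  assumes z1: "is_minimizer (sigma N x y) (ubounds V C x y) z1"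
    and z2: "is_minimizer (sigma N x y) (ubounds V C x y) z2"
  shows "N (\<lambda>t. fdiff z1 x t + fdiff z2 x t) = N (fdiff z1 x) + N (fdiff z2 x)"
    and "N (\<lambda>t. fdiff z1 y t + fdiff z2 y t) = N (fdiff z1 y) + N (fdiff z2 y)"
proof -
  let ?\<sigma> = "sigma N x y" and ?S = "\<lambda>a. N (\<lambda>t. fdiff z1 a t + fdiff z2 a t)"
  have U: "z1 \<in> ubounds V C x y" "z2 \<in> ubounds V C x y"
    using z1 z2 by (simp_all add: is_minimizer_def)
  then have V: "z1 \<in> V" "z2 \<in> V"
    by (simp_all add: mem_ubounds_iff)
  have tri: "?S a \<le> N (fdiff z1 a) + N (fdiff z2 a)" if "a \<in> V" for a
    using norm_triangle[OF diff_closed diff_closed] V that by blast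
  have "fdiff (\<lambda>t. (z1 t + z2 t) / 2) a = (\<lambda>t. (fdiff z1 a t + fdiff z2 a t) / 2)" for a
    by (auto simp: fdiff_def field_simps)
  then have "?\<sigma> (\<lambda>t. (z1 t + z2 t) / 2) = (?S x + ?S y) / 2"
    by (simp add: sigma_def norm_midpoint)
  moreover have "?\<sigma> z1 \<le> ?\<sigma> (\<lambda>t. (z1 t + z2 t) / 2)" "?\<sigma> z1 \<le> ?\<sigma> z2" "?\<sigma> z2 \<le> ?\<sigma> z1"
    using z1 z2 midpoint_mem_ubounds[OF U] U by (simp_all add: is_minimizer_def)
  ultimately show "?S x = N (fdiff z1 x) + N (fdiff z2 x)" "?S y = N (fdiff z1 y) + N (fdiff z2 y)"
    using tri[OF x] tri[OF y] by (simp_all add: sigma_def)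
qed

lemma sigma_minimizers_opposite_in_cone:
  assumes z1: "is_minimizer (sigma N x y) (ubounds V C x y) z1"
    and z2: "is_minimizer (sigma N x y) (ubounds V C x y) z2"
    and lt: "N (fdiff z2 x) < N (fdiff z1 x)"
  shows "fdiff z1 z2 \<in> C" and "fdiff z2 z1 \<in> C"
proof -
  have "z1 \<in> ubounds V C x y" "z2 \<in> ubounds V C x y"
    using z1 z2 by (simp_all add: is_minimizer_def)
  then have z1U: "z1 \<in> V" "fdiff z1 x \<in> C" "fdiff z1 y \<in> C"
    and z2U: "z2 \<in> V" "fdiff z2 x \<in> C" "fdiff z2 y \<in> C"
    by (simp_all add: mem_ubounds_iff)
  have "sigma N x y z1 = sigma N x y z2"
    using z1 z2 by (auto simp: is_minimizer_def intro: order_antisym)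
  \<comment> \<open>Equal \<open>\<sigma>\<close>-values force \<open>z1\<close> to be the one closer to \<open>y\<close>.\<close>
  then have lt_y: "N (fdiff z1 y) < N (fdiff z2 y)"
    using lt by (simp add: sigma_def)
  show "fdiff z1 z2 \<in> C"
    using cone_diff_mem_if_norm_sum_eq[OF z1U(2) diff_closed[OF z2U(1) x]
        sigma_minimizers_norm_sum_eq(1)[OF z1 z2] lt]
    by (simp add: fdiff_fdiff_cancel)
  show "fdiff z2 z1 \<in> C"
    using cone_diff_mem_if_norm_sum_eq[OF z2U(3) diff_closed[OF z1U(1) y]
        sigma_minimizers_norm_sum_eq(2)[OF z2 z1] lt_y]
    by (simp add: fdiff_fdiff_cancel)
qed

lemma sigma_minimizer_unique:
  assumes proper: "cone_proper N C"
    and z1: "is_minimizer (sigma N x y) (ubounds V C x y) z1"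
    and z2: "is_minimizer (sigma N x y) (ubounds V C x y) z2"
  shows "N (fdiff z1 z2) = 0"
proof (cases rule: linorder_cases[of "N (fdiff z1 x)" "N (fdiff z2 x)"])
  case equal
  have V: "z1 \<in> V" "z2 \<in> V"
    using z1 z2 by (simp_all add: is_minimizer_def mem_ubounds_iff)
  have "N (\<lambda>t. (fdiff z1 x t + fdiff z2 x t) / 2) = N (fdiff z1 x)"
    using sigma_minimizers_norm_sum_eq(1)[OF z1 z2] equal by (simp add: norm_midpoint)
  then have "N (fdiff (fdiff z1 x) (fdiff z2 x)) = 0"
    using equal by (intro equal_norms_midpoint_imp_null diff_closed V x) auto
  then show ?thesis
    by (simp add: fdiff_fdiff_cancel)
next
  case less
  then show ?thesis
    using sigma_minimizers_opposite_in_cone[OF z2 z1] cone_proper_antisym[OF proper] by blast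
next
  case greater
  then show ?thesis
    using sigma_minimizers_opposite_in_cone[OF z1 z2] cone_proper_antisym[OF proper] by blast
qed

lemma sigma_minimizer_mem_mubounds:
  assumes proper: "cone_proper N C" and mono: "cone_monotone N C"
    and z: "is_minimizer (sigma N x y) (ubounds V C x y) z"
  shows "z \<in> mubounds V N C x y"
proof -
  have zU: "z \<in> ubounds V C x y"
    using z by (simp add: is_minimizer_def)
  have "N (fdiff z w) = 0" if wU: "w \<in> ubounds V C x y" and wz: "cle C w z" for w
  proof -
    have "N (fdiff w a) \<le> N (fdiff z a)" if "fdiff w a \<in> C" for a
      using mono that wz by (simp add: cone_monotone_def cle_def fdiff_fdiff_cancel)
    then have "sigma N x y w \<le> sigma N x y z"
      using wU by (simp add: mem_ubounds_iff sigma_def add_mono)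
    then have "is_minimizer (sigma N x y) (ubounds V C x y) w"
      using z wU by (auto simp: is_minimizer_def)
    then show ?thesis
      using sigma_minimizer_unique[OF proper z] by blast
  qed
  then show ?thesis
    using zU by (simp add: mubounds_def)
qed

lemma minimizer_on_mubounds_iff:
  assumes proper: "cone_proper N C" and gen: "cone_generating V N C" and mono: "cone_monotone N C"
  shows "is_minimizer (sigma N x y) (mubounds V N C x y) z \<longleftrightarrow>
    is_minimizer (sigma N x y) (ubounds V C x y) z"
proof -
  obtain z0 where z0: "is_minimizer (sigma N x y) (ubounds V C x y) z0"
    using sigma_has_minimizer_on_ubounds[OF gen] by blast
  have "z0 \<in> mubounds V N C x y"
    by (rule sigma_minimizer_mem_mubounds[OF proper mono z0])
  moreover have "mubounds V N C x y \<subseteq> ubounds V C x y"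
    by (auto simp: mubounds_def)
  ultimately show ?thesis
    using z0 sigma_minimizer_mem_mubounds[OF proper mono, of z]
    unfolding is_minimizer_def by (meson order_trans subsetD)
qed

end

theorem quasi_lattice_if_proper_generating:
  assumes proper: "cone_proper N C" and gen: "cone_generating V N C"
  shows "upsilon_quasi_lattice V N C \<and>
    (cone_monotone N C \<longrightarrow> mu_quasi_lattice V N C \<and> quasi_suprema_coincide V N C)"
proof -
  have "upsilon_quasi_lattice V N C"
    unfolding upsilon_quasi_lattice_def quasi_lattice_wrt_def
    using closed ubounds_nonempty[OF _ _ gen] sigma_has_minimizer_on_ubounds[OF _ _ gen]
      sigma_minimizer_unique[OF _ _ proper] by blast
  moreover have "mu_quasi_lattice V N C \<and> quasi_suprema_coincide V N C" if mono: "cone_monotone N C"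
    unfolding mu_quasi_lattice_def quasi_lattice_wrt_def quasi_suprema_coincide_def
    using closed minimizer_on_mubounds_iff[OF _ _ proper gen mono]
      sigma_has_minimizer_on_ubounds[OF _ _ gen] sigma_minimizer_unique[OF _ _ proper]
    by (smt (verit) empty_iff is_minimizer_def)
  ultimately show ?thesis
    by blast
qed

end

end

section \<open>Strict convexity of \<open>\<bar>t\<bar> powr p\<close>\<close>

lemma powr_convex_combination_le:
  fixes x y l p :: real
  assumes p: "1 \<le> p" and "0 \<le> x" "0 \<le> y" "0 \<le> l" "l \<le> 1"
  shows "(l * x + (1 - l) * y) powr p \<le> l * x powr p + (1 - l) * y powr p"
proof (cases "x = 0 \<or> y = 0")
  case True
  have le: "(c * z) powr p \<le> c * z powr p" if "0 \<le> c" "c \<le> 1" "0 \<le> z" for c z :: real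
  proof -
    have "c powr p \<le> c"
      using powr_mono'[of 1 p c] that p by simp
    then show ?thesis
      using that by (simp add: powr_mult mult_right_mono)
  qed
  from True show ?thesis
    using le[of l x] le[of "1 - l" y] assms p by auto
next
  case False
  with assms have "x \<in> {0<..}" "y \<in> {0<..}"
    by auto
  with convex_onD[OF powr_convex[OF p], of "1 - l" x y] assms show ?thesis
    by (simp add: algebra_simps)
qed

lemma abs_powr_convex_combination_le:
  fixes x y l p :: real
  assumes "1 \<le> p" "0 \<le> l" "l \<le> 1"
  shows "\<bar>l * x + (1 - l) * y\<bar> powr p \<le> l * \<bar>x\<bar> powr p + (1 - l) * \<bar>y\<bar> powr p"
proof -
  have "\<bar>l * x + (1 - l) * y\<bar> \<le> l * \<bar>x\<bar> + (1 - l) * \<bar>y\<bar>"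
    using assms by (metis abs_mult abs_of_nonneg abs_triangle_ineq diff_ge_0_iff_ge)
  then have "\<bar>l * x + (1 - l) * y\<bar> powr p \<le> (l * \<bar>x\<bar> + (1 - l) * \<bar>y\<bar>) powr p"
    using assms by (intro powr_mono2) auto
  also have "\<dots> \<le> l * \<bar>x\<bar> powr p + (1 - l) * \<bar>y\<bar> powr p"
    using assms by (intro powr_convex_combination_le) auto
  finally show ?thesis .
qed

lemma abs_powr_midpoint_le:
  fixes a b p :: real
  assumes "1 \<le> p"
  shows "\<bar>(a + b) / 2\<bar> powr p \<le> (\<bar>a\<bar> powr p + \<bar>b\<bar> powr p) / 2"
  using abs_powr_convex_combination_le[OF assms, of "1/2" a b] by (simp add: field_simps)

lemma powr_midpoint_less:
  fixes s t p :: real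
  assumes p: "1 < p" and "0 \<le> s" "s < t"
  shows "((s + t) / 2) powr p < (s powr p + t powr p) / 2"
proof (cases "s = 0")
  case True
  have "(t / 2) powr p = t powr p / 2 powr p"
    by (simp add: powr_divide)
  moreover have "2 powr 1 < 2 powr p"
    using p by (intro powr_less_mono) auto
  moreover have "0 < t powr p"
    using assms True by simp
  ultimately have "(t / 2) powr p < t powr p / 2"
    using divide_strict_left_mono[of 2 "2 powr p" "t powr p"] by simp
  with True show ?thesis
    by simp
next
  case False
  \<comment> \<open>The derivative \<open>p x powr (p - 1)\<close> is strictly increasing, so the mean value theorem on the
    two halves of \<open>[s, t]\<close> gives a larger increment on the right half.\<close>
  define m where "m = (s + t) / 2"
  have s0: "0 < s" and sm: "s < m" "m < t"
    using assms False by (auto simp: m_def)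
  have der: "DERIV (\<lambda>x. x powr p) x :> p * x powr (p - 1)" if "0 < x" for x
    using that by (auto intro!: derivative_eq_intros simp: powr_diff)
  obtain z1 where z1: "s < z1" "z1 < m" "m powr p - s powr p = (m - s) * (p * z1 powr (p - 1))"
    using MVT2[OF sm(1), of "\<lambda>x. x powr p" "\<lambda>x. p * x powr (p - 1)"] der s0 by force
  obtain z2 where z2: "m < z2" "z2 < t" "t powr p - m powr p = (t - m) * (p * z2 powr (p - 1))"
    using MVT2[OF sm(2), of "\<lambda>x. x powr p" "\<lambda>x. p * x powr (p - 1)"] der s0 sm by force
  have "z1 powr (p - 1) < z2 powr (p - 1)"
    using z1 z2 s0 p by (intro powr_less_mono2) auto
  then have "(t - m) * (p * z1 powr (p - 1)) < (t - m) * (p * z2 powr (p - 1))"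
    using sm p by (intro mult_strict_left_mono) auto
  moreover have "m - s = t - m"
    by (simp add: m_def field_simps)
  ultimately have "m powr p - s powr p < t powr p - m powr p"
    using z1(3) z2(3) by metis
  then show ?thesis
    by (simp add: m_def)
qed

lemma abs_powr_midpoint_less:
  fixes a b p :: real
  assumes p: "1 < p" and "a \<noteq> b"
  shows "\<bar>(a + b) / 2\<bar> powr p < (\<bar>a\<bar> powr p + \<bar>b\<bar> powr p) / 2"
proof (cases "\<bar>a\<bar> = \<bar>b\<bar>")
  case True
  with assms have "b = - a" "a \<noteq> 0"
    by (auto simp: abs_eq_iff)
  then show ?thesis
    using p by simp
next
  case False
  have "\<bar>(a + b) / 2\<bar> powr p \<le> ((\<bar>a\<bar> + \<bar>b\<bar>) / 2) powr p"
    using p by (intro powr_mono2) auto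
  also have "\<dots> < (\<bar>a\<bar> powr p + \<bar>b\<bar> powr p) / 2"
    using False powr_midpoint_less[OF p, of "\<bar>a\<bar>" "\<bar>b\<bar>"] powr_midpoint_less[OF p, of "\<bar>b\<bar>" "\<bar>a\<bar>"]
    by (cases "\<bar>a\<bar> < \<bar>b\<bar>") (simp_all add: add.commute)
  finally show ?thesis .
qed

definition powr_midpoint_gap :: "real \<Rightarrow> real \<Rightarrow> real \<Rightarrow> real" where
  "powr_midpoint_gap p a b = (\<bar>a\<bar> powr p + \<bar>b\<bar> powr p) / 2 - \<bar>(a + b) / 2\<bar> powr p"

lemma powr_midpoint_gap_uniformly_pos:
  fixes p c :: real
  assumes p: "1 < p" and c: "0 < c"
  obtains m where "0 < m"
    and "\<And>a b. \<lbrakk>max (\<bar>a\<bar>) (\<bar>b\<bar>) = 1; c \<le> \<bar>a - b\<bar>\<rbrakk> \<Longrightarrow> m \<le> powr_midpoint_gap p a b"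
proof -
  define S where "S = {-1..1} \<times> {-1..1} \<inter>
    {z :: real \<times> real. max (\<bar>fst z\<bar>) (\<bar>snd z\<bar>) = 1 \<and> c \<le> \<bar>fst z - snd z\<bar>}"
  have S: "(a, b) \<in> S \<longleftrightarrow> max (\<bar>a\<bar>) (\<bar>b\<bar>) = 1 \<and> c \<le> \<bar>a - b\<bar>" for a b
    by (auto simp: S_def max_def split: if_splits)
  have "compact S"
    unfolding S_def Collect_conj_eq
    by (intro compact_Int_closed compact_Times compact_Icc closed_Int closed_Collect_eq
        closed_Collect_le continuous_intros)
  show thesis
  proof (cases "S = {}")
    case True
    then show thesis
      using that[of 1] S by auto
  next
    case False
    have "continuous_on S (\<lambda>z. powr_midpoint_gap p (fst z) (snd z))"
      unfolding powr_midpoint_gap_def using p by (intro continuous_intros continuous_on_powr') auto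
    then obtain z0 where "z0 \<in> S"
      and z0: "\<And>z. z \<in> S \<Longrightarrow>
        powr_midpoint_gap p (fst z0) (snd z0) \<le> powr_midpoint_gap p (fst z) (snd z)"
      using continuous_attains_inf[OF \<open>compact S\<close> False] by blast
    moreover have "fst z0 \<noteq> snd z0"
      using \<open>z0 \<in> S\<close> c S[of "fst z0" "snd z0"] by auto
    then have "0 < powr_midpoint_gap p (fst z0) (snd z0)"
      using abs_powr_midpoint_less[OF p] by (simp add: powr_midpoint_gap_def)
    ultimately show thesis
      using that S by force
  qed
qed

lemma powr_midpoint_gap_divide:
  fixes p a b M :: real
  assumes "0 < M"
  shows "powr_midpoint_gap p (a / M) (b / M) = powr_midpoint_gap p a b / M powr p"
proof -
  have "(a / M + b / M) / 2 = (a + b) / 2 / M"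
    by (simp add: add_divide_distrib)
  then have "\<bar>(a / M + b / M) / 2\<bar> powr p = \<bar>(a + b) / 2\<bar> powr p / M powr p"
    using assms by (simp only: abs_divide powr_divide abs_of_pos)
  moreover have "\<bar>a / M\<bar> powr p = \<bar>a\<bar> powr p / M powr p" "\<bar>b / M\<bar> powr p = \<bar>b\<bar> powr p / M powr p"
    using assms by (simp_all only: abs_divide powr_divide abs_of_pos)
  ultimately show ?thesis
    unfolding powr_midpoint_gap_def by (simp add: diff_divide_distrib add_divide_distrib)
qed

lemma powr_midpoint_gap_homogeneous_bound:
  fixes p c :: real
  assumes p: "1 < p" and c: "0 < c"
  obtains m where "0 < m"
    and "\<And>a b. c * max (\<bar>a\<bar>) (\<bar>b\<bar>) \<le> \<bar>a - b\<bar> \<Longrightarrow> m * max (\<bar>a\<bar>) (\<bar>b\<bar>) powr p \<le> powr_midpoint_gap p a b"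
proof -
  obtain m where m: "m > 0" "\<And>a b. max (\<bar>a\<bar>) (\<bar>b\<bar>) = 1 \<Longrightarrow> c \<le> \<bar>a - b\<bar> \<Longrightarrow> m \<le> powr_midpoint_gap p a b"
    using powr_midpoint_gap_uniformly_pos[OF p c] by blast
  have "m * max (\<bar>a\<bar>) (\<bar>b\<bar>) powr p \<le> powr_midpoint_gap p a b"
    if far: "c * max (\<bar>a\<bar>) (\<bar>b\<bar>) \<le> \<bar>a - b\<bar>" for a b
  proof (cases "max (\<bar>a\<bar>) (\<bar>b\<bar>) = 0")
    case True
    then show ?thesis
      by (simp add: powr_midpoint_gap_def max_def split: if_splits)
  next
    case False
    define M where "M = max (\<bar>a\<bar>) (\<bar>b\<bar>)"
    have M0: "M > 0"
      using False by (simp add: M_def le_max_iff_disj order_le_neq_trans)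
    have "max (\<bar>a / M\<bar>) (\<bar>b / M\<bar>) = max (\<bar>a\<bar>) (\<bar>b\<bar>) / M"
      using M0 by (simp add: max_def divide_le_cancel)
    then have "max (\<bar>a / M\<bar>) (\<bar>b / M\<bar>) = 1"
      using M0 by (simp add: M_def)
    moreover have "c \<le> \<bar>a / M - b / M\<bar>"
      using far M0 by (simp add: M_def diff_divide_distrib[symmetric] pos_le_divide_eq)
    ultimately have "m \<le> powr_midpoint_gap p a b / M powr p"
      using m(2) powr_midpoint_gap_divide[OF M0] by metis
    then show ?thesis
      using M0 by (simp add: M_def pos_le_divide_eq)
  qed
  with m(1) that show thesis
    by blast
qed

lemma abs_diff_powr_le_midpoint_gap:
  fixes p e :: real
  assumes p: "1 < p" and e: "0 < e"
  shows "\<exists>K\<ge>0. \<forall>a b. \<bar>a - b\<bar> powr p \<le> e * (\<bar>a\<bar> powr p + \<bar>b\<bar> powr p) + K * powr_midpoint_gap p a b"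
proof -
  define c where "c = e powr (1/p)"
  have c0: "c > 0" and cp: "c powr p = e"
    using p e by (simp_all add: c_def powr_powr)
  obtain m where m: "m > 0"
    and far: "\<And>a b. c * max (\<bar>a\<bar>) (\<bar>b\<bar>) \<le> \<bar>a - b\<bar> \<Longrightarrow>
      m * max (\<bar>a\<bar>) (\<bar>b\<bar>) powr p \<le> powr_midpoint_gap p a b"
    using powr_midpoint_gap_homogeneous_bound[OF p c0] by blast
  define K where "K = 2 powr p / m"
  have "\<bar>a - b\<bar> powr p \<le> e * (\<bar>a\<bar> powr p + \<bar>b\<bar> powr p) + K * powr_midpoint_gap p a b" for a b
  proof -
    define M where "M = max (\<bar>a\<bar>) (\<bar>b\<bar>)"
    have M0: "0 \<le> M"
      by (simp add: M_def le_max_iff_disj)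
    have gap: "0 \<le> powr_midpoint_gap p a b"
      using abs_powr_midpoint_le[of p a b] p by (simp add: powr_midpoint_gap_def)
    show ?thesis
    proof (cases "\<bar>a - b\<bar> < c * M")
      case True
      have "\<bar>a - b\<bar> powr p \<le> (c * M) powr p"
        using True p by (intro powr_mono2) auto
      also have "\<dots> = e * M powr p"
        using c0 M0 cp by (simp add: powr_mult)
      also have "\<dots> \<le> e * (\<bar>a\<bar> powr p + \<bar>b\<bar> powr p)"
        using e by (simp add: M_def max_def)
      finally show ?thesis
        using gap m by (simp add: K_def add_increasing2)
    next
      case False
      have "\<bar>a - b\<bar> \<le> 2 * M"
        by (simp add: M_def max_def abs_triangle_ineq4) linarith
      then have "\<bar>a - b\<bar> powr p \<le> (2 * M) powr p"
        using p by (intro powr_mono2) auto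
      also have "\<dots> = 2 powr p * M powr p"
        using M0 by (simp add: powr_mult)
      also have "\<dots> = K * (m * M powr p)"
        using m by (simp add: K_def)
      also have "\<dots> \<le> K * powr_midpoint_gap p a b"
        using far[of a b] False m by (intro mult_left_mono) (auto simp: K_def M_def)
      finally show ?thesis
        using e by (simp add: add_increasing)
    qed
  qed
  moreover have "0 \<le> K"
    using m by (simp add: K_def)
  ultimately show ?thesis
    by blast
qed

section \<open>The spaces \<open>L\<^sup>p\<close>\<close>

lemma Lp_setI:
  "f \<in> borel_measurable M \<Longrightarrow> integrable M (\<lambda>x. \<bar>f x\<bar> powr p) \<Longrightarrow> f \<in> Lp_set M p"
  by (simp add: Lp_set_def)

lemma Lp_setD: "f \<in> Lp_set M p \<Longrightarrow> f \<in> borel_measurable M"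
  "f \<in> Lp_set M p \<Longrightarrow> integrable M (\<lambda>x. \<bar>f x\<bar> powr p)"
  by (auto simp: Lp_set_def)

definition Lp_integral :: "'a measure \<Rightarrow> real \<Rightarrow> ('a \<Rightarrow> real) \<Rightarrow> real" where
  "Lp_integral M p f = integral\<^sup>L M (\<lambda>x. \<bar>f x\<bar> powr p)"

lemma Lp_integral_nonneg: "0 \<le> Lp_integral M p f"
  unfolding Lp_integral_def by (intro integral_nonneg_AE) auto

lemma Lp_norm_eq_Lp_integral: "Lp_norm M p f = Lp_integral M p f powr (1/p)"
  by (simp add: Lp_norm_def Lp_integral_def)

lemma Lp_norm_nonneg: "0 \<le> Lp_norm M p f"
  by (simp add: Lp_norm_def)

lemma Lp_norm_powr: "0 < p \<Longrightarrow> Lp_norm M p f powr p = Lp_integral M p f"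
  using Lp_integral_nonneg[of M p f] by (simp add: Lp_norm_eq_Lp_integral powr_powr)

lemma Lp_norm_le_iff:
  assumes "0 < p" "0 \<le> A"
  shows "Lp_norm M p f \<le> A \<longleftrightarrow> Lp_integral M p f \<le> A powr p"
proof -
  have "Lp_norm M p f \<le> A \<longleftrightarrow> Lp_norm M p f powr p \<le> A powr p"
    using assms Lp_norm_nonneg[of M p f] by (meson not_le powr_less_mono2 powr_mono2 less_imp_le)
  then show ?thesis
    by (simp only: Lp_norm_powr[OF assms(1)])
qed

lemma Cauchy_fast_subseq:
  fixes D :: "nat \<Rightarrow> nat \<Rightarrow> real"
  assumes Cauchy: "\<And>e. 0 < e \<Longrightarrow> \<exists>n0. \<forall>i\<ge>n0. \<forall>j\<ge>n0. D i j < e"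
  obtains r where "strict_mono r" "\<And>n i j. r n \<le> i \<Longrightarrow> r n \<le> j \<Longrightarrow> D i j < (1/2) ^ n"
proof -
  have "\<exists>r. \<forall>n. (\<forall>i\<ge>r n. \<forall>j\<ge>r n. D i j < (1/2) ^ n) \<and> r n < r (Suc n)"
  proof (intro dependent_nat_choice)
    show "\<exists>n0. \<forall>i\<ge>n0. \<forall>j\<ge>n0. D i j < (1/2) ^ 0"
      using Cauchy[of 1] by simp
  next
    fix r0 n
    obtain n0 where "\<forall>i\<ge>n0. \<forall>j\<ge>n0. D i j < (1/2) ^ Suc n"
      using Cauchy[of "(1/2) ^ Suc n"] by auto
    then show "\<exists>r1. (\<forall>i\<ge>r1. \<forall>j\<ge>r1. D i j < (1/2) ^ Suc n) \<and> r0 < r1"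
      by (intro exI[of _ "max n0 (Suc r0)"]) auto
  qed
  then show ?thesis
    using that by (auto simp: strict_mono_Suc_iff)
qed

context
  fixes M :: "'a measure" and p :: real
  assumes p1: "1 < p"
begin

lemma Lp_set_zero: "(\<lambda>t. 0) \<in> Lp_set M p"
  using p1 by (intro Lp_setI) auto

lemma Lp_set_scale:
  assumes f: "f \<in> Lp_set M p"
  shows "(\<lambda>t. c * f t) \<in> Lp_set M p"
proof -
  note [measurable] = Lp_setD(1)[OF f]
  have "integrable M (\<lambda>x. \<bar>c\<bar> powr p * \<bar>f x\<bar> powr p)"
    using Lp_setD(2)[OF f] by (intro integrable_mult_right)
  then show ?thesis
    by (intro Lp_setI) (auto simp: abs_mult powr_mult)
qed

lemma Lp_set_add:
  assumes f: "f \<in> Lp_set M p" and g: "g \<in> Lp_set M p"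
  shows "(\<lambda>t. f t + g t) \<in> Lp_set M p"
proof -
  note [measurable] = Lp_setD(1)[OF f] Lp_setD(1)[OF g]
  have int: "integrable M (\<lambda>x. 2 powr p * (\<bar>f x\<bar> powr p + \<bar>g x\<bar> powr p))"
    using Lp_setD(2)[OF f] Lp_setD(2)[OF g]
    by (intro integrable_mult_right Bochner_Integration.integrable_add)
  have pointwise: "\<bar>f x + g x\<bar> powr p \<le> 2 powr p * (\<bar>f x\<bar> powr p + \<bar>g x\<bar> powr p)" for x
  proof -
    have "\<bar>f x + g x\<bar> powr p = 2 powr p * \<bar>(f x + g x) / 2\<bar> powr p"
      by (simp add: powr_divide)
    also have "\<dots> \<le> 2 powr p * ((\<bar>f x\<bar> powr p + \<bar>g x\<bar> powr p) / 2)"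
      using abs_powr_midpoint_le[of p "f x" "g x"] p1 by (intro mult_left_mono) auto
    also have "\<dots> \<le> 2 powr p * (\<bar>f x\<bar> powr p + \<bar>g x\<bar> powr p)"
      by (intro mult_left_mono) auto
    finally show ?thesis .
  qed
  show ?thesis
    by (intro Lp_setI) (auto intro!: Bochner_Integration.integrable_bound[OF int]
        order.trans[OF pointwise])
qed

lemma Lp_norm_scale: "Lp_norm M p (\<lambda>t. c * f t) = \<bar>c\<bar> * Lp_norm M p f"
proof -
  have "Lp_integral M p (\<lambda>t. c * f t) = \<bar>c\<bar> powr p * Lp_integral M p f"
    by (simp add: Lp_integral_def abs_mult powr_mult)
  then show ?thesis using p1 Lp_integral_nonneg[of M p f]
    by (simp add: Lp_norm_eq_Lp_integral powr_mult powr_powr)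
qed

lemma Lp_integral_add_le:
  assumes f: "f \<in> Lp_set M p" and g: "g \<in> Lp_set M p" and A: "0 < A" and B: "0 < B"
    and fA: "Lp_integral M p f \<le> A powr p" and gB: "Lp_integral M p g \<le> B powr p"
  shows "Lp_integral M p (\<lambda>t. f t + g t) \<le> (A + B) powr p"
proof -
  define l where "l = A / (A + B)"
  have l: "0 \<le> l" "l \<le> 1" "1 - l = B / (A + B)"
    using A B by (auto simp: l_def field_simps)
  let ?bound = "\<lambda>x. (A + B) powr p *
    (l / A powr p * \<bar>f x\<bar> powr p + (1 - l) / B powr p * \<bar>g x\<bar> powr p)"
  have pointwise: "\<bar>f x + g x\<bar> powr p \<le> ?bound x" for x
  proof -
    have "(A + B) * (l * (f x / A)) = f x" "(A + B) * ((1 - l) * (g x / B)) = g x"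
      using A B by (simp_all add: l(3) l_def field_simps)
    then have "f x + g x = (A + B) * (l * (f x / A) + (1 - l) * (g x / B))"
      by (simp add: distrib_left)
    then have "\<bar>f x + g x\<bar> powr p = (A + B) powr p * \<bar>l * (f x / A) + (1 - l) * (g x / B)\<bar> powr p"
      using A B by (simp add: abs_mult powr_mult)
    also have "\<dots> \<le> (A + B) powr p * (l * \<bar>f x / A\<bar> powr p + (1 - l) * \<bar>g x / B\<bar> powr p)"
      using abs_powr_convex_combination_le[of p l "f x / A" "g x / B"] p1 l
      by (intro mult_left_mono) auto
    also have "\<dots> = ?bound x"
      using A B by (simp add: powr_divide)
    finally show ?thesis .
  qed
  have "integrable M (\<lambda>x. \<bar>f x\<bar> powr p)" "integrable M (\<lambda>x. \<bar>g x\<bar> powr p)"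
    "integrable M (\<lambda>x. \<bar>f x + g x\<bar> powr p)"
    using Lp_setD(2) f g Lp_set_add[OF f g] by auto
  then have "Lp_integral M p (\<lambda>t. f t + g t) \<le>
      (A + B) powr p * (l / A powr p * Lp_integral M p f + (1 - l) / B powr p * Lp_integral M p g)"
    unfolding Lp_integral_def using integral_mono[of M _ ?bound, OF _ _ pointwise] by simp
  also have "\<dots> \<le> (A + B) powr p * (l / A powr p * A powr p + (1 - l) / B powr p * B powr p)"
    using fA gB l A B by (intro mult_left_mono add_mono) auto
  also have "\<dots> = (A + B) powr p"
    using A B by simp
  finally show ?thesis .
qed

lemma Lp_norm_triangle:
  assumes f: "f \<in> Lp_set M p" and g: "g \<in> Lp_set M p"
  shows "Lp_norm M p (\<lambda>t. f t + g t) \<le> Lp_norm M p f + Lp_norm M p g"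
proof -
  have p0: "0 < p" using p1 by simp
  have "Lp_norm M p (\<lambda>t. f t + g t) \<le> Lp_norm M p f + Lp_norm M p g + 2 * d" if d: "d > 0" for d
  proof -
    define A where "A = Lp_norm M p f + d"
    define B where "B = Lp_norm M p g + d"
    have A: "A > 0" "Lp_norm M p f \<le> A" and B: "B > 0" "Lp_norm M p g \<le> B"
      using d Lp_norm_nonneg[of M p f] Lp_norm_nonneg[of M p g] by (auto simp: A_def B_def)
    have "Lp_integral M p (\<lambda>t. f t + g t) \<le> (A + B) powr p"
      using A B by (intro Lp_integral_add_le f g) (auto simp: Lp_norm_le_iff[OF p0, symmetric])
    then have "Lp_norm M p (\<lambda>t. f t + g t) \<le> A + B"
      using A B by (subst Lp_norm_le_iff[OF p0]) auto
    then show ?thesis by (simp add: A_def B_def)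
  qed
  note * = this
  show ?thesis
  proof (rule field_le_epsilon)
    fix e :: real assume "0 < e"
    then show "Lp_norm M p (\<lambda>t. f t + g t) \<le> Lp_norm M p f + Lp_norm M p g + e"
      using *[of "e/2"] by simp
  qed
qed

lemma Lp_seminormed_function_space: "seminormed_function_space (Lp_set M p) (Lp_norm M p)"
  by unfold_locales
    (auto intro: Lp_set_add Lp_set_scale Lp_norm_nonneg Lp_norm_scale Lp_norm_triangle)

interpretation Lp: seminormed_function_space "Lp_set M p" "Lp_norm M p"
  by (rule Lp_seminormed_function_space)

lemma Lp_set_abs: "f \<in> Lp_set M p \<Longrightarrow> (\<lambda>t. \<bar>f t\<bar>) \<in> Lp_set M p"
  by (auto simp: Lp_set_def)

lemma Lp_norm_abs: "Lp_norm M p (\<lambda>t. \<bar>f t\<bar>) = Lp_norm M p f"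
  by (simp add: Lp_norm_def)

lemma Lp_integral_diff_le_midpoint_gap:
  assumes e: "0 < e"
  shows "\<exists>K\<ge>0. \<forall>u\<in>Lp_set M p. \<forall>v\<in>Lp_set M p.
    Lp_integral M p (fdiff u v) \<le> e * (Lp_integral M p u + Lp_integral M p v) +
      K * ((Lp_integral M p u + Lp_integral M p v) / 2 - Lp_integral M p (\<lambda>t. (u t + v t) / 2))"
proof -
  obtain K where K: "K \<ge> 0"
    and pointwise: "\<And>a b. \<bar>a - b\<bar> powr p \<le>
      e * (\<bar>a\<bar> powr p + \<bar>b\<bar> powr p) + K * powr_midpoint_gap p a b"
    using abs_diff_powr_le_midpoint_gap[OF p1 e] by blast
  have "Lp_integral M p (fdiff u v) \<le> e * (Lp_integral M p u + Lp_integral M p v) +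
      K * ((Lp_integral M p u + Lp_integral M p v) / 2 - Lp_integral M p (\<lambda>t. (u t + v t) / 2))"
    if u: "u \<in> Lp_set M p" and v: "v \<in> Lp_set M p" for u v
  proof -
    have iu: "integrable M (\<lambda>x. \<bar>u x\<bar> powr p)" and iv: "integrable M (\<lambda>x. \<bar>v x\<bar> powr p)"
      using u v by (auto simp: Lp_set_def)
    have id: "integrable M (\<lambda>x. \<bar>u x - v x\<bar> powr p)"
      using Lp_setD(2)[OF Lp.diff_closed[OF u v]] by (simp add: fdiff_def)
    have im: "integrable M (\<lambda>x. \<bar>(u x + v x) / 2\<bar> powr p)"
      using Lp_setD(2)[OF Lp.midpoint_closed[OF u v]] by simp
    have "Lp_integral M p (fdiff u v) \<le> integral\<^sup>L M (\<lambda>x. e * (\<bar>u x\<bar> powr p + \<bar>v x\<bar> powr p) +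
        K * ((\<bar>u x\<bar> powr p + \<bar>v x\<bar> powr p) / 2 - \<bar>(u x + v x) / 2\<bar> powr p))"
      unfolding Lp_integral_def fdiff_def using pointwise iu iv id im
      unfolding powr_midpoint_gap_def by (intro integral_mono) auto
    then show ?thesis
      using iu iv im by (simp add: Lp_integral_def)
  qed
  with K show ?thesis
    by blast
qed

lemma Lp_integral_uniformly_convex:
  assumes e: "0 < e"
  obtains c where "0 < c" "c < 1"
    and "\<And>u v. \<lbrakk>u \<in> Lp_set M p; v \<in> Lp_set M p; Lp_integral M p u \<le> 1; Lp_integral M p v \<le> 1;
      e \<le> Lp_integral M p (fdiff u v)\<rbrakk> \<Longrightarrow> Lp_integral M p (\<lambda>t. (u t + v t) / 2) \<le> 1 - c"
proof -
  let ?I = "Lp_integral M p"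
  obtain K where K: "0 \<le> K" and est: "\<forall>u\<in>Lp_set M p. \<forall>v\<in>Lp_set M p.
      ?I (fdiff u v) \<le> e / 4 * (?I u + ?I v) + K * ((?I u + ?I v) / 2 - ?I (\<lambda>t. (u t + v t) / 2))"
    using Lp_integral_diff_le_midpoint_gap[of "e / 4"] e by auto
  define c where "c = min (e / 2 / (K + 1)) (1 / 2)"
  have "?I (\<lambda>t. (u t + v t) / 2) \<le> 1 - c"
    if "u \<in> Lp_set M p" "v \<in> Lp_set M p" "?I u \<le> 1" "?I v \<le> 1" "e \<le> ?I (fdiff u v)" for u v
  proof -
    let ?m = "\<lambda>t. (u t + v t) / 2"
    have "e \<le> e / 4 * (?I u + ?I v) + K * ((?I u + ?I v) / 2 - ?I ?m)"
      using est that by (meson order.trans)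
    also have "\<dots> \<le> e / 4 * 2 + K * (1 - ?I ?m)"
      using that K e by (intro add_mono mult_left_mono) auto
    finally have gap: "e / 2 \<le> K * (1 - ?I ?m)"
      by simp
    then have "0 < 1 - ?I ?m"
      using e mult_nonneg_nonpos[OF K, of "1 - ?I ?m"] by linarith
    then have "e / 2 \<le> (K + 1) * (1 - ?I ?m)"
      using gap by (simp add: distrib_right)
    then have "e / 2 / (K + 1) \<le> 1 - ?I ?m"
      using K by (subst pos_divide_le_eq) (auto simp: mult.commute)
    then show ?thesis
      by (simp add: c_def)
  qed
  moreover have "0 < c" "c < 1"
    using e K by (auto simp: c_def)
  ultimately show thesis
    using that by blast
qed

lemma Lp_uniformly_convex:
  assumes e: "0 < e"
  shows "\<exists>\<delta>>0. \<forall>u\<in>Lp_set M p. \<forall>v\<in>Lp_set M p. Lp_norm M p u \<le> 1 \<longrightarrow> Lp_norm M p v \<le> 1 \<longrightarrow>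
    e \<le> Lp_norm M p (fdiff u v) \<longrightarrow> Lp_norm M p (\<lambda>t. (u t + v t) / 2) \<le> 1 - \<delta>"
proof -
  have p0: "0 < p"
    using p1 by simp
  obtain c where c: "0 < c" "c < 1" and uc: "\<And>u v. \<lbrakk>u \<in> Lp_set M p; v \<in> Lp_set M p;
      Lp_integral M p u \<le> 1; Lp_integral M p v \<le> 1; e powr p \<le> Lp_integral M p (fdiff u v)\<rbrakk>
      \<Longrightarrow> Lp_integral M p (\<lambda>t. (u t + v t) / 2) \<le> 1 - c"
    using Lp_integral_uniformly_convex[of "e powr p"] e by auto
  define \<delta> where "\<delta> = 1 - (1 - c) powr (1 / p)"
  have "(1 - c) powr (1 / p) < 1 powr (1 / p)"
    using c p0 by (intro powr_less_mono2) auto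
  then have "0 < \<delta>"
    by (simp add: \<delta>_def)
  moreover have "Lp_norm M p (\<lambda>t. (u t + v t) / 2) \<le> 1 - \<delta>"
    if u: "u \<in> Lp_set M p" "Lp_norm M p u \<le> 1" and v: "v \<in> Lp_set M p" "Lp_norm M p v \<le> 1"
      and uv: "e \<le> Lp_norm M p (fdiff u v)" for u v
  proof -
    have "e powr p \<le> Lp_integral M p (fdiff u v)"
      using uv e p0 Lp_norm_powr[OF p0, of M "fdiff u v"] by (metis powr_mono2 less_imp_le)
    moreover have "Lp_integral M p u \<le> 1" "Lp_integral M p v \<le> 1"
      using u(2) v(2) Lp_norm_le_iff[OF p0, of 1] by auto
    ultimately have "Lp_integral M p (\<lambda>t. (u t + v t) / 2) \<le> 1 - c"
      using uc u(1) v(1) by blast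
    then show ?thesis
      using c p0 by (simp add: \<delta>_def Lp_norm_le_iff powr_powr)
  qed
  ultimately show ?thesis
    by blast
qed

lemma nn_integral_abs_powr_eq:
  "f \<in> Lp_set M p \<Longrightarrow> (\<integral>\<^sup>+x. ennreal (\<bar>f x\<bar> powr p) \<partial>M) = ennreal (Lp_integral M p f)"
  unfolding Lp_integral_def by (intro nn_integral_eq_integral) (auto simp: Lp_set_def)

lemma Lp_set_if_nn_integral_le:
  assumes [measurable]: "f \<in> borel_measurable M"
    and fin: "(\<integral>\<^sup>+x. ennreal (\<bar>f x\<bar> powr p) \<partial>M) \<le> ennreal B" and B0: "0 \<le> B"
  shows "f \<in> Lp_set M p" "Lp_integral M p f \<le> B"
proof -
  have "integrable M (\<lambda>x. \<bar>f x\<bar> powr p)"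
    using fin by (intro integrableI_nonneg) (auto simp: order_le_less_trans)
  then show fV: "f \<in> Lp_set M p" by (simp add: Lp_set_def)
  show "Lp_integral M p f \<le> B"
    using B0 fin nn_integral_abs_powr_eq[OF fV] by simp
qed

lemma Lp_AE_bounded_if_incseq:
  assumes G: "\<And>n. G n \<in> Lp_set M p" and nonneg: "\<And>n x. 0 \<le> G n x"
    and inc: "\<And>n x. G n x \<le> G (Suc n) x" and bound: "\<And>n. Lp_norm M p (G n) \<le> B"
  shows "AE x in M. \<exists>b. \<forall>n. G n x \<le> b"
proof -
  have p0: "0 < p"
    using p1 by simp
  have B: "0 \<le> B"
    using bound[of 0] Lp_norm_nonneg[of M p "G 0"] by linarith
  note [measurable] = Lp_setD(1)[OF G]
  define H where "H x = (SUP n. ennreal (G n x powr p))" for x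
  have "incseq (\<lambda>n x. ennreal (G n x powr p))"
    using nonneg inc p0 by (intro incseq_SucI le_funI ennreal_leI powr_mono2) auto
  then have "(\<integral>\<^sup>+x. H x \<partial>M) = (SUP n. \<integral>\<^sup>+x. ennreal (G n x powr p) \<partial>M)"
    unfolding H_def by (intro nn_integral_monotone_convergence_SUP) measurable
  also have "\<dots> \<le> ennreal (B powr p)"
  proof (intro SUP_least)
    fix n
    have "Lp_integral M p (G n) \<le> B powr p"
      using bound[of n] B Lp_norm_le_iff[OF p0] by blast
    then show "(\<integral>\<^sup>+x. ennreal (G n x powr p) \<partial>M) \<le> ennreal (B powr p)"
      using nn_integral_abs_powr_eq[OF G[of n]] nonneg by (simp add: ennreal_leI)
  qed
  finally have "AE x in M. H x \<noteq> \<infinity>"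
    by (intro nn_integral_PInf_AE) (auto simp: H_def top_unique)
  then show ?thesis
  proof eventually_elim
    fix x assume "H x \<noteq> \<infinity>"
    then obtain b where b: "H x = ennreal b" "0 \<le> b"
      by (cases "H x") auto
    have "ennreal (G n x powr p) \<le> ennreal b" for n
      unfolding b(1)[symmetric] H_def by (rule SUP_upper) simp
    then have "G n x powr p \<le> b" for n
      using b(2) by simp
    then have root: "(G n x powr p) powr (1 / p) \<le> b powr (1 / p)" for n
      using p0 by (intro powr_mono2) auto
    have "G n x \<le> b powr (1 / p)" for n
      using root[of n] nonneg[of n x] p0 by (simp add: powr_powr)
    then show "\<exists>b. \<forall>n. G n x \<le> b"
      by blast
  qed
qed

lemma Lp_norm_sum_abs_le:
  fixes d :: "nat \<Rightarrow> 'a \<Rightarrow> real"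
  assumes d: "\<And>i. d i \<in> Lp_set M p"
  shows "(\<lambda>x. \<Sum>i<n. \<bar>d i x\<bar>) \<in> Lp_set M p \<and>
    Lp_norm M p (\<lambda>x. \<Sum>i<n. \<bar>d i x\<bar>) \<le> (\<Sum>i<n. Lp_norm M p (d i))"
proof (induction n)
  case 0
  show ?case
    using Lp_set_zero by (simp add: Lp_norm_def)
next
  case (Suc n)
  have "Lp_norm M p (\<lambda>x. \<Sum>i<Suc n. \<bar>d i x\<bar>) \<le>
      Lp_norm M p (\<lambda>x. \<Sum>i<n. \<bar>d i x\<bar>) + Lp_norm M p (\<lambda>x. \<bar>d n x\<bar>)"
    using Suc Lp_set_abs[OF d] by (simp add: Lp_norm_triangle)
  then show ?case
    using Suc Lp_set_add[OF _ Lp_set_abs[OF d]] by (simp add: Lp_norm_abs)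
qed

lemma Lp_AE_convergent_if_fast_Cauchy:
  assumes g: "\<And>n. g n \<in> Lp_set M p"
    and fast: "\<And>n. Lp_norm M p (fdiff (g (Suc n)) (g n)) < (1/2) ^ n"
  shows "AE x in M. convergent (\<lambda>n. g n x)"
proof -
  define d where "d n = fdiff (g (Suc n)) (g n)" for n
  have d: "d n \<in> Lp_set M p" for n
    unfolding d_def by (intro Lp.diff_closed g)
  define G where "G n = (\<lambda>x. \<Sum>i<n. \<bar>d i x\<bar>)" for n
  have G: "G n \<in> Lp_set M p \<and> Lp_norm M p (G n) \<le> (\<Sum>i<n. Lp_norm M p (d i))" for n
    unfolding G_def by (rule Lp_norm_sum_abs_le[where d=d, OF d])
  have "Lp_norm M p (G n) \<le> (\<Sum>i<n. (1/2) ^ i)" for n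
    using G[of n] sum_mono[of "{..<n}" "\<lambda>i. Lp_norm M p (d i)" "\<lambda>i. (1/2) ^ i"] fast
    by (force simp: d_def less_imp_le)
  also have "(\<Sum>i<n. (1/2 :: real) ^ i) \<le> (\<Sum>i. (1/2) ^ i)" for n
    by (intro sum_le_suminf) auto
  also have "(\<Sum>i. (1/2 :: real) ^ i) = 2"
    using suminf_geometric[of "1/2 :: real"] by simp
  finally have "AE x in M. \<exists>b. \<forall>n. G n x \<le> b"
    using G by (intro Lp_AE_bounded_if_incseq[where B=2]) (auto simp: G_def sum_nonneg)
  then show ?thesis
  proof eventually_elim
    fix x assume "\<exists>b. \<forall>n. G n x \<le> b"
    then obtain b where "\<And>n. (\<Sum>i<n. \<bar>d i x\<bar>) \<le> b"
      by (auto simp: G_def)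
    then have "(\<Sum>i\<le>n. \<bar>d i x\<bar>) \<le> b" for n
      by (metis lessThan_Suc_atMost)
    then have "summable (\<lambda>i. \<bar>d i x\<bar>)"
      using bounded_imp_summable[of "\<lambda>i. \<bar>d i x\<bar>" b] by simp
    then have "summable (\<lambda>i. d i x)"
      by (rule summable_rabs_cancel)
    then have "(\<lambda>n. \<Sum>i<n. d i x) \<longlonglongrightarrow> (\<Sum>i. d i x)"
      by (rule summable_LIMSEQ)
    moreover have "(\<Sum>i<n. d i x) = g n x - g 0 x" for n
      using sum_lessThan_telescope[of "\<lambda>i. g i x" n] by (simp add: d_def fdiff_def)
    ultimately have "(\<lambda>n. g n x - g 0 x + g 0 x) \<longlonglongrightarrow> (\<Sum>i. d i x) + g 0 x"
      by (intro tendsto_add) auto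
    then show "convergent (\<lambda>n. g n x)"
      by (auto simp: convergent_def)
  qed
qed

lemma Lp_norm_limit_le:
  assumes s: "\<And>n. s n \<in> Lp_set M p" and g: "g \<in> Lp_set M p"
    and f[measurable]: "f \<in> borel_measurable M" and lim: "AE x in M. (\<lambda>n. s n x) \<longlonglongrightarrow> f x"
    and bound: "\<forall>\<^sub>F n in sequentially. Lp_norm M p (fdiff (s n) g) \<le> e" and e: "0 \<le> e"
  shows "fdiff f g \<in> Lp_set M p \<and> Lp_norm M p (fdiff f g) \<le> e"
proof -
  have p0: "0 < p"
    using p1 by simp
  note [measurable] = Lp_setD(1)[OF s] Lp_setD(1)[OF g]
  have "AE x in M. (\<lambda>n. ennreal (\<bar>s n x - g x\<bar> powr p)) \<longlonglongrightarrow> ennreal (\<bar>f x - g x\<bar> powr p)"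
    using lim by eventually_elim (intro tendsto_ennrealI tendsto_intros, use p0 in auto)
  then have "AE x in M. liminf (\<lambda>n. ennreal (\<bar>s n x - g x\<bar> powr p)) = ennreal (\<bar>f x - g x\<bar> powr p)"
    by eventually_elim (simp add: lim_imp_Liminf)
  then have "(\<integral>\<^sup>+x. ennreal (\<bar>f x - g x\<bar> powr p) \<partial>M) =
      (\<integral>\<^sup>+x. liminf (\<lambda>n. ennreal (\<bar>s n x - g x\<bar> powr p)) \<partial>M)"
    by (intro nn_integral_cong_AE) auto
  also have "\<dots> \<le> liminf (\<lambda>n. \<integral>\<^sup>+x. ennreal (\<bar>s n x - g x\<bar> powr p) \<partial>M)"
    by (intro nn_integral_liminf) measurable
  also have "\<dots> \<le> liminf (\<lambda>n. ennreal (e powr p))"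
  proof (intro Liminf_mono)
    show "\<forall>\<^sub>F n in sequentially. (\<integral>\<^sup>+x. ennreal (\<bar>s n x - g x\<bar> powr p) \<partial>M) \<le> ennreal (e powr p)"
      using bound
    proof eventually_elim
      fix n assume "Lp_norm M p (fdiff (s n) g) \<le> e"
      then have "Lp_integral M p (fdiff (s n) g) \<le> e powr p"
        using Lp_norm_le_iff[OF p0] e by blast
      then show "(\<integral>\<^sup>+x. ennreal (\<bar>s n x - g x\<bar> powr p) \<partial>M) \<le> ennreal (e powr p)"
        using nn_integral_abs_powr_eq[OF Lp.diff_closed[OF s g]] by (simp add: fdiff_def)
    qed
  qed
  also have "\<dots> = ennreal (e powr p)"
    by (simp add: Liminf_const)
  finally have "(\<integral>\<^sup>+x. ennreal (\<bar>fdiff f g x\<bar> powr p) \<partial>M) \<le> ennreal (e powr p)"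
    by (simp add: fdiff_def)
  moreover have "fdiff f g \<in> borel_measurable M"
    unfolding fdiff_def by measurable
  ultimately have "fdiff f g \<in> Lp_set M p" "Lp_integral M p (fdiff f g) \<le> e powr p"
    using Lp_set_if_nn_integral_le by auto
  then show ?thesis
    using Lp_norm_le_iff[OF p0] e by blast
qed

lemma Lp_complete:
  assumes s: "\<And>n. s n \<in> Lp_set M p"
    and Cauchy: "\<And>e. 0 < e \<Longrightarrow> \<exists>n0. \<forall>i\<ge>n0. \<forall>j\<ge>n0. Lp_norm M p (fdiff (s i) (s j)) < e"
  shows "\<exists>f\<in>Lp_set M p. (\<lambda>n. Lp_norm M p (fdiff (s n) f)) \<longlonglongrightarrow> 0"
proof -
  obtain r where r: "strict_mono r"
    and fast: "\<And>n i j. r n \<le> i \<Longrightarrow> r n \<le> j \<Longrightarrow> Lp_norm M p (fdiff (s i) (s j)) < (1/2) ^ n"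
    using Cauchy_fast_subseq[OF Cauchy] by blast
  have "AE x in M. convergent (\<lambda>n. s (r n) x)"
    using r by (intro Lp_AE_convergent_if_fast_Cauchy s fast) (auto simp: strict_mono_less_eq)
  then have lim: "AE x in M. (\<lambda>n. s (r n) x) \<longlonglongrightarrow> lim (\<lambda>n. s (r n) x)"
    by eventually_elim (simp add: convergent_LIMSEQ_iff)
  define f where "f x = lim (\<lambda>n. s (r n) x)" for x
  have [measurable]: "f \<in> borel_measurable M"
    unfolding f_def using Lp_setD(1)[OF s] by measurable
  have close: "fdiff f (s n) \<in> Lp_set M p \<and> Lp_norm M p (fdiff f (s n)) \<le> e"
    if e: "0 < e" and n0: "\<forall>i\<ge>n0. \<forall>j\<ge>n0. Lp_norm M p (fdiff (s i) (s j)) < e" and n: "n0 \<le> n"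
    for e n0 n
  proof (rule Lp_norm_limit_le[OF s s])
    show "\<forall>\<^sub>F m in sequentially. Lp_norm M p (fdiff (s (r m)) (s n)) \<le> e"
      using eventually_ge_at_top[of n0]
    proof eventually_elim
      fix m assume "n0 \<le> m"
      then have "n0 \<le> r m"
        using seq_suble[OF r, of m] by linarith
      then show "Lp_norm M p (fdiff (s (r m)) (s n)) \<le> e"
        using n0 n by (simp add: less_imp_le)
    qed
  qed (use lim e in \<open>simp_all add: f_def\<close>)
  obtain n1 where "\<forall>i\<ge>n1. \<forall>j\<ge>n1. Lp_norm M p (fdiff (s i) (s j)) < 1"
    using Cauchy[of 1] by auto
  then have "fdiff f (s n1) \<in> Lp_set M p"
    using close[of 1 n1 n1] by simp
  moreover have "f = (\<lambda>t. fdiff f (s n1) t + s n1 t)"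
    by (auto simp: fdiff_def)
  ultimately have f: "f \<in> Lp_set M p"
    using Lp_set_add[OF _ s] by metis
  have "(\<lambda>n. Lp_norm M p (fdiff (s n) f)) \<longlonglongrightarrow> 0"
  proof (rule LIMSEQ_I)
    fix e :: real assume e: "0 < e"
    then obtain n0 where "\<forall>i\<ge>n0. \<forall>j\<ge>n0. Lp_norm M p (fdiff (s i) (s j)) < e / 2"
      using Cauchy[of "e / 2"] by auto
    then have "Lp_norm M p (fdiff (s n) f) < e" if "n0 \<le> n" for n
      using close[of "e / 2" n0 n] that e Lp.norm_fdiff_commute by fastforce
    then show "\<exists>n0. \<forall>n\<ge>n0. norm (Lp_norm M p (fdiff (s n) f) - 0) < e"
      by (auto simp: abs_of_nonneg[OF Lp_norm_nonneg])
  qed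
  with f show ?thesis
    by blast
qed

lemma Lp_uniformly_convex_function_space:
  "uniformly_convex_function_space (Lp_set M p) (Lp_norm M p)"
  using Lp_seminormed_function_space Lp_complete Lp_uniformly_convex
  by (simp add: uniformly_convex_function_space_def uniformly_convex_function_space_axioms_def)

end

lemma Lp_claim_if_gt_1:
  assumes "1 < p"
  shows "Lp_claim M p"
proof -
  interpret uniformly_convex_function_space "Lp_set M p" "Lp_norm M p"
    by (rule Lp_uniformly_convex_function_space[OF assms])
  show ?thesis
    unfolding Lp_claim_def Let_def using quasi_lattice_if_proper_generating by blast
qed

theorem corollary6p3:
  fixes M :: "'a measure" and p :: real
  assumes "1 < p"
  shows "Lp_claim M p \<and>
         Lp_claim (count_space (UNIV :: nat set)) p \<and>
         (\<forall>n::nat. Lp_claim (count_space {..<n}) p)"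
  by (intro conjI allI Lp_claim_if_gt_1[OF assms])

end
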